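(* Let $G=A\times_\varphi K$ be a motion group such that $G$ acts regularly on $\widehat A$. Then for every $\mu\in M(G)$, the map $\alpha\mapsto\widehat\mu(\Lambda_\alpha)$ from $\widehat A$ to $\boldsymbol B(L^2(K))$ is uniformly continuous with respect to the operator norm topology.
   Context: Motion group: $G=A\times_\varphi K$, $A$ locally compact Abelian (pairing $\langle a,\alpha\rangle=\alpha(a)$), $K$ compact, $\varphi:K\to\mathrm{Aut}(A)$ a homomorphism with $(a,\kappa)\mapsto\varphi_\kappa(a)$ continuous, product $(a_1,\kappa_1)(a_2,\kappa_2)=(a_1+\varphi_{\kappa_1}(a_2),\kappa_1\kappa_2)$; $K$ acts on $\widehat A$ by $\varphi_\kappa(\alpha)=\alpha\circ\varphi_{\kappa^{-1}}$; regular action in Mackey's sense (Folland, p. 183). $\Lambda_\alpha$ on $L^2(K)$: $[\Lambda_\alpha(a,\kappa)\phi](\kappa')=\langle a,\varphi_{\kappa'}(\alpha)\rangle\phi(\kappa^{-1}\kappa')$. $\widehat\mu(U)=\int_G U(x^{-1})\,d\mu(x)$. Uniform continuity refers to the uniform structure of the locally compact Abelian group $\widehat A$: for each $\epsilon>0$ there is a neighborhood $V$ of $0$ with $\|\widehat\mu(\Lambda_\alpha)-\widehat\mu(\Lambda_\beta)\|<\epsilon$ whenever $\alpha-\beta\in V$. *)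

theory Defs
  imports "HOL-Analysis.Analysis" "HOL-Probability.Probability"
begin

text \<open>A is a locally compact Hausdorff abelian group
 (type 'a, additive notation), K a compact Hausdorff group (type 'k, written additively
 but NOT assumed commutative: class topological_group_add is non-commutative).\<close>

definition topological_automorphism :: "('a::topological_ab_group_add \<Rightarrow> 'a) \<Rightarrow> bool" where
  "topological_automorphism f \<longleftrightarrow>
     (\<forall>a b. f (a + b) = f a + f b) \<and> bij f \<and> homeomorphism UNIV UNIV f (inv f)"

definition motion_action :: "('k::topological_group_add \<Rightarrow> 'a::topological_ab_group_add \<Rightarrow> 'a) \<Rightarrow> bool" where
  "motion_action \<phi> \<longleftrightarrow>
     (\<forall>\<kappa>. topological_automorphism (\<phi> \<kappa>)) \<and>
     \<phi> 0 = id \<and> (\<forall>\<kappa>1 \<kappa>2. \<phi> (\<kappa>1 + \<kappa>2) = \<phi> \<kappa>1 \<circ> \<phi> \<kappa>2) \<and>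
     continuous_on UNIV (\<lambda>p::'a \<times> 'k. \<phi> (snd p) (fst p))"

definition sd_mult :: "('k::group_add \<Rightarrow> 'a::ab_group_add \<Rightarrow> 'a) \<Rightarrow> 'a \<times> 'k \<Rightarrow> 'a \<times> 'k \<Rightarrow> 'a \<times> 'k" where
  "sd_mult \<phi> x y = (fst x + \<phi> (snd x) (fst y), snd x + snd y)"

definition sd_inv :: "('k::group_add \<Rightarrow> 'a::ab_group_add \<Rightarrow> 'a) \<Rightarrow> 'a \<times> 'k \<Rightarrow> 'a \<times> 'k" where
  "sd_inv \<phi> x = (- \<phi> (- snd x) (fst x), - snd x)"

definition dual_group :: "('a::topological_ab_group_add \<Rightarrow> complex) set" where
  "dual_group = {\<alpha>. continuous_on UNIV \<alpha> \<and> (\<forall>a b. \<alpha> (a + b) = \<alpha> a * \<alpha> b) \<and> (\<forall>a. cmod (\<alpha> a) = 1)}"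

text \<open>Open sets of \<widehat>A for its (compact-open = compact convergence) topology.\<close>
definition dual_open :: "('a::topological_ab_group_add \<Rightarrow> complex) set \<Rightarrow> bool" where
  "dual_open U \<longleftrightarrow> U \<subseteq> dual_group \<and>
     (\<forall>\<alpha>\<in>U. \<exists>C \<delta>. compact C \<and> \<delta> > 0 \<and>
        {\<gamma>\<in>dual_group. \<forall>a\<in>C. cmod (\<gamma> a - \<alpha> a) < \<delta>} \<subseteq> U)"

definition dual_borel :: "('a::topological_ab_group_add \<Rightarrow> complex) set set" where
  "dual_borel = sigma_sets dual_group {U. dual_open U}"

definition dual_act :: "('k::group_add \<Rightarrow> 'a::ab_group_add \<Rightarrow> 'a) \<Rightarrow> 'k \<Rightarrow> ('a \<Rightarrow> complex) \<Rightarrow> ('a \<Rightarrow> complex)" where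
  "dual_act \<phi> \<kappa> \<alpha> = (\<lambda>a. \<alpha> (\<phi> (- \<kappa>) a))"

text \<open>Regular action in Mackey's sense (Folland): the orbit space is countably separated,
  i.e. there are countably many K-invariant Borel sets E_j in \<widehat>A such that every
  orbit is the intersection of those E_j that contain it.\<close>
definition regular_action :: "('k::topological_group_add \<Rightarrow> 'a::topological_ab_group_add \<Rightarrow> 'a) \<Rightarrow> bool" where
  "regular_action \<phi> \<longleftrightarrow>
     (\<exists>E :: nat \<Rightarrow> ('a \<Rightarrow> complex) set.
        (\<forall>j. E j \<in> dual_borel \<and> (\<forall>\<kappa>. \<forall>\<alpha>\<in>E j. dual_act \<phi> \<kappa> \<alpha> \<in> E j)) \<and>
        (\<forall>\<alpha>\<in>dual_group. range (\<lambda>\<kappa>. dual_act \<phi> \<kappa> \<alpha>) = dual_group \<inter> \<Inter>{E j |j. \<alpha> \<in> E j}))"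

definition radon_fin :: "'x::topological_space measure \<Rightarrow> bool" where
  "radon_fin \<nu> \<longleftrightarrow> sets \<nu> = sets borel \<and> finite_measure \<nu> \<and>
     (\<forall>E\<in>sets borel. emeasure \<nu> E = (SUP C\<in>{C. compact C \<and> C \<subseteq> E}. emeasure \<nu> C)) \<and>
     (\<forall>E\<in>sets borel. emeasure \<nu> E = (INF U\<in>{U. open U \<and> E \<subseteq> U}. emeasure \<nu> U))"

definition haar_prob :: "'k::topological_group_add measure \<Rightarrow> bool" where
  "haar_prob m \<longleftrightarrow> radon_fin m \<and> prob_space m \<and>
     (\<forall>\<kappa>. \<forall>E\<in>sets borel. emeasure m ((\<lambda>x. \<kappa> + x) -` E) = emeasure m E)"

text \<open>L^2(K) (functions, norms and inner products do not depend on the representative).\<close>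
definition L2 :: "'k measure \<Rightarrow> ('k \<Rightarrow> complex) set" where
  "L2 m = {f. f \<in> borel_measurable m \<and> integrable m (\<lambda>x. (cmod (f x))\<^sup>2)}"

definition l2_inner :: "'k measure \<Rightarrow> ('k \<Rightarrow> complex) \<Rightarrow> ('k \<Rightarrow> complex) \<Rightarrow> complex" where
  "l2_inner m f g = (\<integral>x. f x * cnj (g x) \<partial>m)"

definition l2_norm :: "'k measure \<Rightarrow> ('k \<Rightarrow> complex) \<Rightarrow> real" where
  "l2_norm m f = sqrt (\<integral>x. (cmod (f x))\<^sup>2 \<partial>m)"

definition Lambda :: "('k::group_add \<Rightarrow> 'a::ab_group_add \<Rightarrow> 'a) \<Rightarrow> ('a \<Rightarrow> complex) \<Rightarrow> 'a \<times> 'k \<Rightarrow> ('k \<Rightarrow> complex) \<Rightarrow> ('k \<Rightarrow> complex)" where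
  "Lambda \<phi> \<alpha> x f = (\<lambda>\<kappa>'. dual_act \<phi> \<kappa>' \<alpha> (fst x) * f (- snd x + \<kappa>'))"

text \<open>A complex measure mu \<in> M(G) is given as mu = h \<cdot> nu with nu a finite Radon measure
  and h bounded Borel.  \<widehat>mu(Lambda_alpha) = \<integral> Lambda_alpha(x^{-1}) d mu(x) as a weak
  operator integral: its sesquilinear form <\<widehat>mu(Lambda_alpha) f, g>.\<close>
definition ft_form :: "('k::group_add \<Rightarrow> 'a::ab_group_add \<Rightarrow> 'a) \<Rightarrow> 'k measure \<Rightarrow> ('a \<times> 'k) measure
    \<Rightarrow> ('a \<times> 'k \<Rightarrow> complex) \<Rightarrow> ('a \<Rightarrow> complex) \<Rightarrow> ('k \<Rightarrow> complex) \<Rightarrow> ('k \<Rightarrow> complex) \<Rightarrow> complex" where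
  "ft_form \<phi> m \<nu> h \<alpha> f g = (\<integral>x. h x * l2_inner m (Lambda \<phi> \<alpha> (sd_inv \<phi> x) f) g \<partial>\<nu>)"

text \<open>Operator norm of the bounded operator on L^2(K) with sesquilinear form B.\<close>
definition form_norm :: "'k measure \<Rightarrow> (('k \<Rightarrow> complex) \<Rightarrow> ('k \<Rightarrow> complex) \<Rightarrow> complex) \<Rightarrow> real" where
  "form_norm m B = (SUP p\<in>{(f, g). f \<in> L2 m \<and> g \<in> L2 m \<and> l2_norm m f \<le> 1 \<and> l2_norm m g \<le> 1}.
                      cmod (B (fst p) (snd p)))"

end

theory Submission
  imports Defs
begin

text \<open>
  For \<open>\<gamma> \<in> \<widehat>A\<close> the form of \<open>\<widehat>\<mu>(\<Lambda>\<^sub>\<gamma>)\<close> is \<open>\<integral> h J\<^sub>\<gamma> d\<nu>\<close>, where the coefficient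
  \<open>J\<^sub>\<gamma>(x) = \<langle>\<Lambda>\<^sub>\<gamma>(x\<^sup>-\<^sup>1) f, g\<rangle>\<close> is, for \<open>x = (a, k)\<close> and \<open>x\<^sup>-\<^sup>1 = (a', -k)\<close>, the integral over
  \<open>u \<in> K\<close> of \<open>\<gamma>(\<phi>\<^sub>-\<^sub>u a') f(k + u)\<close> times the conjugate of \<open>g(u)\<close>.
  By Cauchy-Schwarz, \<open>|J\<^sub>\<alpha>(x) - J\<^sub>\<beta>(x)|\<close> is at most the supremum over \<open>u\<close> of
  \<open>|\<alpha>(\<phi>\<^sub>-\<^sub>u a') - \<beta>(\<phi>\<^sub>-\<^sub>u a')|\<close> when \<open>f, g\<close> are in the unit ball. By inner regularity choose a
  compact \<open>C\<^sub>0 \<subseteq> G\<close> carrying \<open>\<nu>\<close> up to \<open>\<epsilon>\<close>; the points \<open>\<phi>\<^sub>-\<^sub>u a'\<close> with \<open>x \<in> C\<^sub>0\<close>, \<open>u \<in> K\<close>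
  form a compact \<open>C \<subseteq> A\<close>, and the characters that are \<open>\<delta>\<close>-close to 1 on \<open>C\<close> form a
  neighbourhood of 1 in \<open>\<widehat>A\<close>. If \<open>\<alpha> \<beta>\<^sup>-\<^sup>1\<close> lies in it, the coefficients differ by at most
  \<open>\<delta>\<close> on \<open>C\<^sub>0\<close> and by at most 2 elsewhere, so the operators differ in norm by at most
  \<open>\<delta> \<nu>(G) + 2 \<nu>(G - C\<^sub>0)\<close>.

  The delicate point is that \<open>J\<^sub>\<gamma>\<close> is Borel measurable on \<open>G\<close>. It is in fact continuous,
  because translation is continuous in \<open>L\<^sup>2(K)\<close>: for indicators this is the regularity of
  Haar measure, and it passes to simple functions and then to all of \<open>L\<^sup>2(K)\<close> by density.
\<close>

section \<open>Finite Radon measures\<close>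

lemma radon_fin_sets: "radon_fin \<mu> \<Longrightarrow> sets \<mu> = sets borel"
  and radon_fin_space: "radon_fin \<mu> \<Longrightarrow> space \<mu> = UNIV"
  and radon_fin_finite_measure: "radon_fin \<mu> \<Longrightarrow> finite_measure \<mu>"
  unfolding radon_fin_def by (auto dest: sets_eq_imp_space_eq)

lemma radon_fin_inner_compact:
  fixes \<mu> :: "'x::t2_space measure"
  assumes \<mu>: "radon_fin \<mu>" and A: "A \<in> sets borel" and e: "e > 0"
  obtains C where "compact C" "C \<subseteq> A" "measure \<mu> (A - C) < e"
proof (cases "measure \<mu> A < e")
  case True
  then show ?thesis by (intro that[of "{}"]) auto
next
  case False
  interpret finite_measure \<mu> using \<mu> by (rule radon_fin_finite_measure)
  have "emeasure \<mu> A = (SUP C\<in>{C. compact C \<and> C \<subseteq> A}. emeasure \<mu> C)"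
    using \<mu> A unfolding radon_fin_def by blast
  moreover have "ennreal (measure \<mu> A - e) < emeasure \<mu> A"
    using False e by (simp add: emeasure_eq_measure ennreal_lessI)
  ultimately obtain C where C: "compact C" "C \<subseteq> A" "ennreal (measure \<mu> A - e) < emeasure \<mu> C"
    by (auto simp: less_SUP_iff)
  have "C \<in> sets \<mu>" "A \<in> sets \<mu>"
    using C(1) A radon_fin_sets[OF \<mu>] by (auto simp: compact_imp_closed)
  then have "measure \<mu> (A - C) = measure \<mu> A - measure \<mu> C"
    using C(2) by (simp add: finite_measure_Diff)
  moreover have "measure \<mu> A - e < measure \<mu> C"
    using C(3) False e by (simp add: emeasure_eq_measure ennreal_less_iff)
  ultimately show ?thesis using C(1,2) that by simp
qed

lemma radon_fin_outer_open:
  fixes \<mu> :: "'x::topological_space measure"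
  assumes \<mu>: "radon_fin \<mu>" and A: "A \<in> sets borel" and e: "e > 0"
  obtains U where "open U" "A \<subseteq> U" "measure \<mu> (U - A) < e"
proof -
  interpret finite_measure \<mu> using \<mu> by (rule radon_fin_finite_measure)
  have "emeasure \<mu> A = (INF U\<in>{U. open U \<and> A \<subseteq> U}. emeasure \<mu> U)"
    using \<mu> A unfolding radon_fin_def by blast
  moreover have "emeasure \<mu> A < ennreal (measure \<mu> A + e)"
    using e by (simp add: emeasure_eq_measure ennreal_lessI)
  ultimately obtain U where U: "open U" "A \<subseteq> U" "emeasure \<mu> U < ennreal (measure \<mu> A + e)"
    by (auto simp: INF_less_iff)
  have "U \<in> sets \<mu>" "A \<in> sets \<mu>"
    using U(1) A radon_fin_sets[OF \<mu>] by auto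
  then have "measure \<mu> (U - A) = measure \<mu> U - measure \<mu> A"
    using U(2) by (simp add: finite_measure_Diff)
  moreover have "measure \<mu> U < measure \<mu> A + e"
    using U(3) e by (simp add: emeasure_eq_measure ennreal_less_iff del: ennreal_plus)
  ultimately show ?thesis using U(1,2) that by simp
qed

lemma radon_fin_compact_open_approx:
  fixes \<mu> :: "'x::t2_space measure"
  assumes \<mu>: "radon_fin \<mu>" and A: "A \<in> sets borel" and e: "e > 0"
  obtains C U where "compact C" "open U" "C \<subseteq> A" "A \<subseteq> U" "measure \<mu> (U - C) < e"
proof -
  interpret finite_measure \<mu> using \<mu> by (rule radon_fin_finite_measure)
  have e2: "e/2 > 0" using e by simp
  obtain C where C: "compact C" "C \<subseteq> A" "measure \<mu> (A - C) < e/2"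
    using radon_fin_inner_compact[OF \<mu> A e2] by blast
  obtain U where U: "open U" "A \<subseteq> U" "measure \<mu> (U - A) < e/2"
    using radon_fin_outer_open[OF \<mu> A e2] by blast
  have "A - C \<in> sets \<mu>" "U - A \<in> sets \<mu>"
    using A C(1) U(1) radon_fin_sets[OF \<mu>] by (auto simp: compact_imp_closed)
  moreover have "U - C = (U - A) \<union> (A - C)" using C U by auto
  ultimately have "measure \<mu> (U - C) \<le> measure \<mu> (U - A) + measure \<mu> (A - C)"
    by (simp add: measure_Un_le)
  with C(3) U(3) have "measure \<mu> (U - C) < e" by linarith
  from C(1) U(1) C(2) U(2) this show ?thesis by (rule that)
qed

section \<open>Square-integrable functions\<close>

lemma L2_measurable: "f \<in> L2 M \<Longrightarrow> f \<in> borel_measurable M"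
  and L2_integrable_square: "f \<in> L2 M \<Longrightarrow> integrable M (\<lambda>x. (cmod (f x))\<^sup>2)"
  unfolding L2_def by auto

lemma l2_norm_square: "(l2_norm M f)\<^sup>2 = (\<integral>x. (cmod (f x))\<^sup>2 \<partial>M)"
  unfolding l2_norm_def by simp

lemma l2_norm_nonneg: "0 \<le> l2_norm M f"
  unfolding l2_norm_def by simp

lemma l2_norm_minus_commute: "l2_norm M (\<lambda>x. f x - g x) = l2_norm M (\<lambda>x. g x - f x)"
  unfolding l2_norm_def by (simp add: norm_minus_commute)

lemma norm_square_add_le: "(cmod (a + b))\<^sup>2 \<le> (cmod a)\<^sup>2 + 2 * (cmod a * cmod b) + (cmod b)\<^sup>2"
proof -
  have "(cmod (a + b))\<^sup>2 \<le> (cmod a + cmod b)\<^sup>2"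
    by (intro power_mono norm_triangle_ineq) simp
  then show ?thesis by (simp add: power2_sum)
qed

lemma L2_integrable_norm_mult:
  assumes f: "f \<in> L2 M" and g: "g \<in> L2 M"
  shows "integrable M (\<lambda>x. cmod (f x) * cmod (g x))"
proof (rule Bochner_Integration.integrable_bound)
  have [measurable]: "f \<in> borel_measurable M" "g \<in> borel_measurable M"
    using f g by (simp_all add: L2_measurable)
  show "integrable M (\<lambda>x. (cmod (f x))\<^sup>2 + (cmod (g x))\<^sup>2)"
    using f g by (simp add: L2_integrable_square)
  show "(\<lambda>x. cmod (f x) * cmod (g x)) \<in> borel_measurable M"
    by measurable
  have "a * b \<le> a\<^sup>2 + b\<^sup>2" if "0 \<le> a" "0 \<le> b" for a b :: real
    using sum_squares_bound[of a b] mult_nonneg_nonneg[OF that] by linarith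
  then show "AE x in M. norm (cmod (f x) * cmod (g x)) \<le> norm ((cmod (f x))\<^sup>2 + (cmod (g x))\<^sup>2)"
    by (intro AE_I2) simp
qed

lemma L2_add:
  assumes f: "f \<in> L2 M" and g: "g \<in> L2 M"
  shows "(\<lambda>x. f x + g x) \<in> L2 M"
  unfolding L2_def
proof (intro CollectI conjI)
  have [measurable]: "f \<in> borel_measurable M" "g \<in> borel_measurable M"
    using f g by (simp_all add: L2_measurable)
  show "(\<lambda>x. f x + g x) \<in> borel_measurable M" by measurable
  show "integrable M (\<lambda>x. (cmod (f x + g x))\<^sup>2)"
  proof (rule Bochner_Integration.integrable_bound)
    show "integrable M (\<lambda>x. (cmod (f x))\<^sup>2 + 2 * (cmod (f x) * cmod (g x)) + (cmod (g x))\<^sup>2)"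
      using f g L2_integrable_norm_mult[OF f g] by (simp add: L2_integrable_square)
    show "(\<lambda>x. (cmod (f x + g x))\<^sup>2) \<in> borel_measurable M" by measurable
    show "AE x in M. norm ((cmod (f x + g x))\<^sup>2)
        \<le> norm ((cmod (f x))\<^sup>2 + 2 * (cmod (f x) * cmod (g x)) + (cmod (g x))\<^sup>2)"
      using norm_square_add_le by (intro AE_I2) (simp add: abs_of_nonneg)
  qed
qed

lemma L2_uminus: "f \<in> L2 M \<Longrightarrow> (\<lambda>x. - f x) \<in> L2 M"
  unfolding L2_def by simp

lemma L2_diff: "f \<in> L2 M \<Longrightarrow> g \<in> L2 M \<Longrightarrow> (\<lambda>x. f x - g x) \<in> L2 M"
  using L2_add[of f M "\<lambda>x. - g x"] L2_uminus[of g M] by simp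

lemma L2_Cauchy_Schwarz:
  assumes f: "f \<in> L2 M" and g: "g \<in> L2 M"
  shows "(\<integral>x. cmod (f x) * cmod (g x) \<partial>M) \<le> l2_norm M f * l2_norm M g"
proof -
  have [measurable]: "f \<in> borel_measurable M" "g \<in> borel_measurable M"
    using f g by (simp_all add: L2_measurable)
  have nn: "(\<integral>\<^sup>+x. ennreal (cmod (h x)) ^ 2 \<partial>M) = ennreal (\<integral>x. (cmod (h x))\<^sup>2 \<partial>M)"
    if "h \<in> L2 M" for h
    using nn_integral_eq_integral[OF L2_integrable_square[OF that]]
    by (simp add: ennreal_power)
  have "ennreal ((\<integral>x. cmod (f x) * cmod (g x) \<partial>M)\<^sup>2)
      = (\<integral>\<^sup>+x. ennreal (cmod (f x)) * ennreal (cmod (g x)) \<partial>M)\<^sup>2"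
    using nn_integral_eq_integral[OF L2_integrable_norm_mult[OF f g]]
    by (simp add: ennreal_mult ennreal_power)
  also have "\<dots> \<le> (\<integral>\<^sup>+x. ennreal (cmod (f x)) ^ 2 \<partial>M) * (\<integral>\<^sup>+x. ennreal (cmod (g x)) ^ 2 \<partial>M)"
    by (rule Cauchy_Schwarz_nn_integral) simp_all
  also have "\<dots> = ennreal ((l2_norm M f)\<^sup>2 * (l2_norm M g)\<^sup>2)"
    by (simp add: nn f g l2_norm_square ennreal_mult)
  finally have "(\<integral>x. cmod (f x) * cmod (g x) \<partial>M)\<^sup>2 \<le> (l2_norm M f * l2_norm M g)\<^sup>2"
    by (simp add: power_mult_distrib)
  then show ?thesis
    by (rule power2_le_imp_le) (simp add: l2_norm_nonneg)
qed

lemma l2_norm_add_le: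
  assumes f: "f \<in> L2 M" and g: "g \<in> L2 M"
  shows "l2_norm M (\<lambda>x. f x + g x) \<le> l2_norm M f + l2_norm M g"
proof -
  have fg: "integrable M (\<lambda>x. cmod (f x) * cmod (g x))"
    using f g by (rule L2_integrable_norm_mult)
  have "(l2_norm M (\<lambda>x. f x + g x))\<^sup>2 = (\<integral>x. (cmod (f x + g x))\<^sup>2 \<partial>M)"
    by (rule l2_norm_square)
  also have "\<dots> \<le> (\<integral>x. (cmod (f x))\<^sup>2 + 2 * (cmod (f x) * cmod (g x)) + (cmod (g x))\<^sup>2 \<partial>M)"
    using f g fg L2_add[OF f g] by (intro integral_mono norm_square_add_le) (simp_all add: L2_integrable_square)
  also have "\<dots> = (l2_norm M f)\<^sup>2 + 2 * (\<integral>x. cmod (f x) * cmod (g x) \<partial>M) + (l2_norm M g)\<^sup>2"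
    using f g fg by (simp add: L2_integrable_square l2_norm_square)
  also have "\<dots> \<le> (l2_norm M f + l2_norm M g)\<^sup>2"
    using L2_Cauchy_Schwarz[OF f g] by (simp add: power2_sum)
  finally show ?thesis
    by (rule power2_le_imp_le) (simp add: l2_norm_nonneg)
qed

lemma l2_norm_diff_triangle:
  assumes "f \<in> L2 M" "g \<in> L2 M" "h \<in> L2 M"
  shows "l2_norm M (\<lambda>x. f x - h x) \<le> l2_norm M (\<lambda>x. f x - g x) + l2_norm M (\<lambda>x. g x - h x)"
  using l2_norm_add_le[OF L2_diff[OF assms(1,2)] L2_diff[OF assms(2,3)]] by simp

lemma borel_measurable_cnj [measurable (raw)]:
  "f \<in> borel_measurable M \<Longrightarrow> (\<lambda>x. cnj (f x)) \<in> borel_measurable M"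
  by (erule measurable_compose) (intro borel_measurable_continuous_onI continuous_intros)

lemma L2_bounded_product:
  assumes f: "f \<in> L2 M" and g: "g \<in> L2 M"
    and \<Psi>: "\<Psi> \<in> borel_measurable M" "\<And>x. cmod (\<Psi> x) \<le> B"
  shows "integrable M (\<lambda>x. \<Psi> x * f x * cnj (g x))"
    and "cmod (\<integral>x. \<Psi> x * f x * cnj (g x) \<partial>M) \<le> B * l2_norm M f * l2_norm M g"
proof -
  have [measurable]: "f \<in> borel_measurable M" "g \<in> borel_measurable M"
    using f g by (simp_all add: L2_measurable)
  have B: "0 \<le> B" using \<Psi>(2) norm_ge_zero order_trans by blast
  have fg: "integrable M (\<lambda>x. cmod (f x) * cmod (g x))"
    using f g by (rule L2_integrable_norm_mult)
  have bound: "cmod (\<Psi> x * f x * cnj (g x)) \<le> B * (cmod (f x) * cmod (g x))" for x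
    using \<Psi>(2)[of x] by (simp add: norm_mult mult.assoc mult_right_mono)
  show int: "integrable M (\<lambda>x. \<Psi> x * f x * cnj (g x))"
  proof (rule Bochner_Integration.integrable_bound)
    show "integrable M (\<lambda>x. B * (cmod (f x) * cmod (g x)))" using fg by simp
    show "(\<lambda>x. \<Psi> x * f x * cnj (g x)) \<in> borel_measurable M" using \<Psi>(1) by measurable
    show "AE x in M. norm (\<Psi> x * f x * cnj (g x)) \<le> norm (B * (cmod (f x) * cmod (g x)))"
      using bound B by (intro AE_I2) (simp add: abs_of_nonneg)
  qed
  have "cmod (\<integral>x. \<Psi> x * f x * cnj (g x) \<partial>M) \<le> (\<integral>x. cmod (\<Psi> x * f x * cnj (g x)) \<partial>M)"
    by (rule integral_norm_bound)
  also have "\<dots> \<le> (\<integral>x. B * (cmod (f x) * cmod (g x)) \<partial>M)"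
    using int fg bound by (intro integral_mono) auto
  also have "\<dots> \<le> B * (l2_norm M f * l2_norm M g)"
    using L2_Cauchy_Schwarz[OF f g] B by (simp add: mult_left_mono)
  finally show "cmod (\<integral>x. \<Psi> x * f x * cnj (g x) \<partial>M) \<le> B * l2_norm M f * l2_norm M g"
    by (simp add: mult.assoc)
qed

lemma L2_simple_approx:
  assumes f: "f \<in> L2 M" and e: "e > 0"
  obtains s where "simple_function M s" "l2_norm M (\<lambda>x. s x - f x) < e"
proof -
  have [measurable]: "f \<in> borel_measurable M" using f by (rule L2_measurable)
  obtain s where s: "\<And>i. simple_function M (s i)" "\<And>x. x \<in> space M \<Longrightarrow> (\<lambda>i. s i x) \<longlonglongrightarrow> f x"
    "\<And>i x. x \<in> space M \<Longrightarrow> cmod (s i x) \<le> 2 * cmod (f x)"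
    using borel_measurable_implies_sequence_metric[of f M 0] unfolding dist_norm by fastforce
  have [measurable]: "s i \<in> borel_measurable M" for i
    using s(1) by (rule borel_measurable_simple_function)
  have "(\<lambda>i. \<integral>x. (cmod (s i x - f x))\<^sup>2 \<partial>M) \<longlonglongrightarrow> (\<integral>x. 0 \<partial>M)"
  proof (rule integral_dominated_convergence[where w = "\<lambda>x. 9 * (cmod (f x))\<^sup>2"])
    show "integrable M (\<lambda>x. 9 * (cmod (f x))\<^sup>2)" using f by (simp add: L2_integrable_square)
    show "AE x in M. (\<lambda>i. (cmod (s i x - f x))\<^sup>2) \<longlonglongrightarrow> 0"
    proof (rule AE_I2)
      fix x assume "x \<in> space M"
      then have "(\<lambda>i. (cmod (s i x - f x))\<^sup>2) \<longlonglongrightarrow> (cmod (f x - f x))\<^sup>2"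
        using s(2) by (intro tendsto_intros)
      then show "(\<lambda>i. (cmod (s i x - f x))\<^sup>2) \<longlonglongrightarrow> 0" by simp
    qed
    show "AE x in M. norm ((cmod (s i x - f x))\<^sup>2) \<le> 9 * (cmod (f x))\<^sup>2" for i
    proof (rule AE_I2)
      fix x assume "x \<in> space M"
      then have "cmod (s i x - f x) \<le> 3 * cmod (f x)"
        using norm_triangle_ineq4[of "s i x" "f x"] s(3)[of x i] by linarith
      then have "(cmod (s i x - f x))\<^sup>2 \<le> (3 * cmod (f x))\<^sup>2" by (rule power_mono) simp
      then show "norm ((cmod (s i x - f x))\<^sup>2) \<le> 9 * (cmod (f x))\<^sup>2" by (simp add: power_mult_distrib)
    qed
  qed simp_all
  then have lim: "(\<lambda>i. \<integral>x. (cmod (s i x - f x))\<^sup>2 \<partial>M) \<longlonglongrightarrow> 0" by simp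
  have "e\<^sup>2 > 0" using e by simp
  with lim have "\<forall>\<^sub>F i in sequentially. (\<integral>x. (cmod (s i x - f x))\<^sup>2 \<partial>M) < e\<^sup>2"
    by (rule order_tendstoD(2))
  then obtain N where "\<forall>i\<ge>N. (\<integral>x. (cmod (s i x - f x))\<^sup>2 \<partial>M) < e\<^sup>2"
    by (auto simp: eventually_sequentially)
  then have "sqrt (\<integral>x. (cmod (s N x - f x))\<^sup>2 \<partial>M) < sqrt (e\<^sup>2)"
    using real_sqrt_less_mono by blast
  then have "l2_norm M (\<lambda>x. s N x - f x) < e"
    unfolding l2_norm_def using e by simp
  with s(1) show ?thesis by (rule that)
qed

section \<open>Continuity of translation in the square mean\<close>

lemma continuous_on_UNIV_metricI:
  fixes f :: "'p::topological_space \<Rightarrow> 'b::metric_space"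
  assumes "\<And>x e. e > 0 \<Longrightarrow> \<exists>N. open N \<and> x \<in> N \<and> (\<forall>y\<in>N. dist (f y) (f x) < e)"
  shows "continuous_on UNIV f"
  unfolding continuous_on_topological
proof (intro ballI allI impI)
  fix x B assume "open B" "f x \<in> B"
  then obtain e where "e > 0" "ball (f x) e \<subseteq> B"
    by (auto simp: open_contains_ball)
  moreover obtain N where "open N" "x \<in> N" "\<forall>y\<in>N. dist (f y) (f x) < e"
    using assms \<open>e > 0\<close> by blast
  ultimately show "\<exists>A. open A \<and> x \<in> A \<and> (\<forall>y\<in>UNIV. y \<in> A \<longrightarrow> f y \<in> B)"
    by (metis UNIV_I dist_commute mem_ball subsetD)
qed

lemma compact_small_translates_subset:
  fixes C U :: "'k::topological_group_add set"
  assumes "compact C" "open U" "C \<subseteq> U"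
  obtains W where "open W" "0 \<in> W" "\<And>w c. w \<in> W \<Longrightarrow> c \<in> C \<Longrightarrow> w + c \<in> U \<and> - w + c \<in> U"
proof -
  define S where "S = (\<lambda>p::'k \<times> 'k. fst p + snd p) -` U \<inter> (\<lambda>p. - fst p + snd p) -` U"
  have "continuous_on UNIV (\<lambda>p::'k \<times> 'k. fst p + snd p)"
    and "continuous_on UNIV (\<lambda>p::'k \<times> 'k. - fst p + snd p)"
    by (intro continuous_intros)+
  then have "open S" unfolding S_def using assms(2) by (intro open_Int open_vimage)
  moreover have "{0} \<times> C \<subseteq> S" using assms(3) unfolding S_def by auto
  ultimately have "\<exists>W. 0 \<in> W \<and> open W \<and> W \<times> C \<subseteq> S"
    by (rule Elementary_Topology.tube_lemma[OF assms(1)])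
  then obtain W where W: "0 \<in> W" "open W" "W \<times> C \<subseteq> S" by blast
  have "w + c \<in> U \<and> - w + c \<in> U" if "w \<in> W" "c \<in> C" for w c
    using subsetD[OF W(3), of "(w, c)"] that unfolding S_def by simp
  with W(2,1) show ?thesis by (rule that)
qed

lemma uniformly_close_on_compact_fibres:
  fixes \<Phi> :: "'p::topological_space \<times> 'k::topological_space \<Rightarrow> 'b::metric_space"
  assumes "compact (UNIV :: 'k set)" and "continuous_on UNIV \<Phi>" and "e > 0"
  obtains N where "open N" "p0 \<in> N" "\<And>p u. p \<in> N \<Longrightarrow> dist (\<Phi> (p, u)) (\<Phi> (p0, u)) < e"
proof -
  let ?O = "(\<lambda>z. dist (\<Phi> z) (\<Phi> (p0, snd z))) -` {..<e}"
  have "continuous_on UNIV (\<lambda>z::'p \<times> 'k. \<Phi> (p0, snd z))"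
    by (rule continuous_on_compose2[OF assms(2)]) (auto intro!: continuous_intros)
  with assms(2) have "continuous_on UNIV (\<lambda>z. dist (\<Phi> z) (\<Phi> (p0, snd z)))"
    by (rule continuous_on_dist)
  then have "open ?O" by (rule open_vimage[OF open_lessThan])
  moreover have "{p0} \<times> UNIV \<subseteq> ?O" using assms(3) by auto
  ultimately have "\<exists>N. p0 \<in> N \<and> open N \<and> N \<times> UNIV \<subseteq> ?O"
    by (rule Elementary_Topology.tube_lemma[OF assms(1)])
  then obtain N where N: "p0 \<in> N" "open N" "N \<times> UNIV \<subseteq> ?O" by blast
  have "dist (\<Phi> (p, u)) (\<Phi> (p0, u)) < e" if "p \<in> N" for p u
    using subsetD[OF N(3), of "(p, u)"] that by simp
  with N(2,1) show ?thesis by (rule that)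
qed

locale haar_group =
  fixes m :: "'k::{topological_group_add, t2_space} measure"
  assumes haar_prob: "haar_prob m"
begin

lemma radon_fin_m: "radon_fin m"
  using haar_prob unfolding haar_prob_def by simp

lemma sets_m [measurable_cong]: "sets m = sets borel"
  using radon_fin_m by (rule radon_fin_sets)

lemma space_m [simp]: "space m = UNIV"
  using radon_fin_m by (rule radon_fin_space)

sublocale prob_space m
  using haar_prob unfolding haar_prob_def by simp

lemma borel_measurable_continuous_m: "continuous_on UNIV F \<Longrightarrow> F \<in> borel_measurable m"
  by (simp add: borel_measurable_continuous_onI measurable_cong_sets[OF sets_m refl])

lemma measurable_translate [measurable]: "(\<lambda>x. c + x) \<in> measurable m m"
  by (simp add: measurable_cong_sets[OF sets_m sets_m] borel_measurable_continuous_onI continuous_intros)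

lemma emeasure_translate: "A \<in> sets borel \<Longrightarrow> emeasure m ((\<lambda>x. c + x) -` A) = emeasure m A"
  using haar_prob unfolding haar_prob_def by simp

lemma measure_translate: "A \<in> sets borel \<Longrightarrow> measure m ((\<lambda>x. c + x) -` A) = measure m A"
  by (simp add: measure_def emeasure_translate)

lemma distr_translate: "distr m m (\<lambda>x. c + x) = m"
  by (rule measure_eqI) (simp_all add: emeasure_distr sets_m emeasure_translate)

lemma integral_translate:
  fixes F :: "'k \<Rightarrow> 'b::{banach, second_countable_topology}"
  assumes "F \<in> borel_measurable m"
  shows "(\<integral>x. F (c + x) \<partial>m) = integral\<^sup>L m F"
  using integral_distr[OF measurable_translate assms, of c] by (simp add: distr_translate)

lemma integrable_translate_iff:
  fixes F :: "'k \<Rightarrow> 'b::{banach, second_countable_topology}"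
  assumes "F \<in> borel_measurable m"
  shows "integrable m (\<lambda>x. F (c + x)) \<longleftrightarrow> integrable m F"
  using integrable_distr_eq[OF measurable_translate assms, of c] by (simp add: distr_translate)

lemma L2_translate:
  assumes "f \<in> L2 m"
  shows "(\<lambda>x. f (c + x)) \<in> L2 m"
proof -
  have [measurable]: "f \<in> borel_measurable m" using assms by (rule L2_measurable)
  have "(\<lambda>x. f (c + x)) \<in> borel_measurable m" by measurable
  then show ?thesis
    using assms integrable_translate_iff[of "\<lambda>x. (cmod (f x))\<^sup>2" c] by (simp add: L2_def)
qed

lemma l2_norm_translate: "f \<in> borel_measurable m \<Longrightarrow> l2_norm m (\<lambda>x. f (c + x)) = l2_norm m f"
  unfolding l2_norm_def using integral_translate[of "\<lambda>x. (cmod (f x))\<^sup>2" c] by simp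

lemma l2_norm_translate_diff:
  assumes "f \<in> L2 m"
  shows "l2_norm m (\<lambda>u. f (a + u) - f (b + u)) = l2_norm m (\<lambda>v. f ((a - b) + v) - f v)"
proof -
  have "(a - b) + (b + u) = a + u" for u
    by (simp add: add.assoc[symmetric])
  then have "l2_norm m (\<lambda>u. f (a + u) - f (b + u)) = l2_norm m (\<lambda>u. f ((a - b) + (b + u)) - f (b + u))"
    by simp
  also have "\<dots> = l2_norm m (\<lambda>v. f ((a - b) + v) - f v)"
    using assms by (intro l2_norm_translate[of "\<lambda>v. f ((a - b) + v) - f v"] L2_measurable L2_diff L2_translate)
  finally show ?thesis .
qed

lemma simple_function_L2: "simple_function m s \<Longrightarrow> s \<in> L2 m"
  unfolding L2_def
  by (auto intro!: integrable_simple_function simple_function_compose1[where g = "\<lambda>z. (cmod z)\<^sup>2"]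
      borel_measurable_simple_function)

lemma L2_bounded_product_translate:
  assumes f: "f \<in> L2 m" and g: "g \<in> L2 m"
    and \<Psi>: "\<Psi> \<in> borel_measurable m" "\<And>u. cmod (\<Psi> u) \<le> B"
  shows "integrable m (\<lambda>u. \<Psi> u * f (c + u) * cnj (g u))"
    and "cmod (\<integral>u. \<Psi> u * f (c + u) * cnj (g u) \<partial>m) \<le> B * l2_norm m f * l2_norm m g"
  using L2_bounded_product[OF L2_translate[OF f] g \<Psi>, of c]
  by (simp_all add: l2_norm_translate L2_measurable[OF f])

end

definition L2_translation_continuous :: "'k::topological_group_add measure \<Rightarrow> ('k \<Rightarrow> complex) \<Rightarrow> bool" where
  "L2_translation_continuous m f \<longleftrightarrow>
     (\<forall>e>0. \<exists>W. open W \<and> 0 \<in> W \<and> (\<forall>w\<in>W. l2_norm m (\<lambda>v. f (w + v) - f v) < e))"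

lemma divide_add_one_mult_less:
  fixes e x :: real
  assumes "0 < e" "0 \<le> x"
  shows "e / (2 * (x + 1)) * x < e / 2"
proof -
  have "e / (2 * (x + 1)) * x = e / 2 * (x / (x + 1))"
    by simp
  also have "\<dots> < e / 2 * 1"
    using assms by (intro mult_strict_left_mono) (simp_all add: divide_less_eq)
  finally show ?thesis by simp
qed

context haar_group
begin

lemma measure_translate_symdiff_small:
  assumes A: "A \<in> sets borel" and e: "e > 0"
  obtains W where "open W" "0 \<in> W" "\<And>w. w \<in> W \<Longrightarrow> measure m {v. (w + v \<in> A) \<noteq> (v \<in> A)} < e"
proof -
  have e2: "e/2 > 0" using e by simp
  obtain C U where CU: "compact C" "open U" "C \<subseteq> A" "A \<subseteq> U" "measure m (U - C) < e/2"
    using radon_fin_compact_open_approx[OF radon_fin_m A e2] by blast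
  obtain W where W: "open W" "0 \<in> W" "\<And>w c. w \<in> W \<Longrightarrow> c \<in> C \<Longrightarrow> w + c \<in> U \<and> - w + c \<in> U"
    using compact_small_translates_subset[OF CU(1,2) subset_trans[OF CU(3,4)]] by blast
  have "measure m {v. (w + v \<in> A) \<noteq> (v \<in> A)} < e" if w: "w \<in> W" for w
  proof -
    have UC: "U - C \<in> sets m" using CU(1,2) by (simp add: compact_imp_closed sets_m)
    then have UC': "(\<lambda>v. w + v) -` (U - C) \<in> sets m"
      using measurable_sets[OF measurable_translate] by simp
    \<comment> \<open>as \<open>\<pm>w + C \<subseteq> U\<close>: if exactly one of \<open>v\<close>, \<open>w + v\<close> is in \<open>A\<close>, one of them is in \<open>U - C\<close>\<close>
    have "{v. (w + v \<in> A) \<noteq> (v \<in> A)} \<subseteq> (U - C) \<union> (\<lambda>v. w + v) -` (U - C)"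
      using W(3)[OF w] CU(3,4) by (auto simp: subset_iff) (metis minus_add_cancel)
    moreover have "{v. (w + v \<in> A) \<noteq> (v \<in> A)} = ((\<lambda>v. w + v) -` A - A) \<union> (A - (\<lambda>v. w + v) -` A)"
      by auto
    then have "{v. (w + v \<in> A) \<noteq> (v \<in> A)} \<in> sets m"
      using measurable_sets[OF measurable_translate, of A w] A by (auto simp: sets_m)
    ultimately have "measure m {v. (w + v \<in> A) \<noteq> (v \<in> A)} \<le> measure m ((U - C) \<union> (\<lambda>v. w + v) -` (U - C))"
      using UC UC' by (intro finite_measure_mono) auto
    also have "\<dots> \<le> measure m (U - C) + measure m ((\<lambda>v. w + v) -` (U - C))"
      using UC UC' by (intro measure_Un_le)
    also have "\<dots> < e"
      using CU(5) UC by (simp add: measure_translate sets_m)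
    finally show ?thesis .
  qed
  with W(1,2) show ?thesis by (rule that)
qed

lemma L2_translation_continuous_indicator:
  assumes A: "A \<in> sets borel"
  shows "L2_translation_continuous m (\<lambda>v. indicator A v *\<^sub>R c)"
  unfolding L2_translation_continuous_def
proof (intro allI impI)
  fix e :: real assume e: "e > 0"
  have c1: "cmod c + 1 > 0" by (simp add: add_nonneg_pos)
  define \<eta> where "\<eta> = e / (cmod c + 1)"
  have \<eta>: "\<eta> > 0" unfolding \<eta>_def using e c1 by simp
  then have "\<eta>\<^sup>2 > 0" by simp
  then obtain W where W: "open W" "0 \<in> W"
    "\<And>w. w \<in> W \<Longrightarrow> measure m {v. (w + v \<in> A) \<noteq> (v \<in> A)} < \<eta>\<^sup>2"
    using measure_translate_symdiff_small[OF A] by blast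
  have "l2_norm m (\<lambda>v. indicator A (w + v) *\<^sub>R c - indicator A v *\<^sub>R c) < e" if w: "w \<in> W" for w
  proof -
    let ?D = "{v. (w + v \<in> A) \<noteq> (v \<in> A)}"
    have "(cmod (indicator A (w + v) *\<^sub>R c - indicator A v *\<^sub>R c))\<^sup>2 = (cmod c)\<^sup>2 * indicator ?D v" for v
      by (cases "w + v \<in> A"; cases "v \<in> A") simp_all
    then have "l2_norm m (\<lambda>v. indicator A (w + v) *\<^sub>R c - indicator A v *\<^sub>R c) = cmod c * sqrt (measure m ?D)"
      by (simp add: l2_norm_def real_sqrt_mult)
    also have "\<dots> \<le> (cmod c + 1) * sqrt (measure m ?D)"
      by (intro mult_right_mono) simp_all
    also have "\<dots> < (cmod c + 1) * \<eta>"
      using real_sqrt_less_mono[OF W(3)[OF w]] \<eta> c1 by (intro mult_strict_left_mono) simp_all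
    also have "\<dots> = e" unfolding \<eta>_def using c1 by simp
    finally show ?thesis .
  qed
  with W(1,2) show "\<exists>W. open W \<and> 0 \<in> W \<and>
      (\<forall>w\<in>W. l2_norm m (\<lambda>v. indicator A (w + v) *\<^sub>R c - indicator A v *\<^sub>R c) < e)"
    by blast
qed

lemma L2_translation_continuous_add:
  assumes f: "f \<in> L2 m" and g: "g \<in> L2 m"
    and tf: "L2_translation_continuous m f" and tg: "L2_translation_continuous m g"
  shows "L2_translation_continuous m (\<lambda>x. f x + g x)"
  unfolding L2_translation_continuous_def
proof (intro allI impI)
  fix e :: real assume "e > 0"
  then have e2: "e/2 > 0" by simp
  obtain Wf where Wf: "open Wf" "0 \<in> Wf" "\<forall>w\<in>Wf. l2_norm m (\<lambda>v. f (w + v) - f v) < e/2"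
    using tf e2 unfolding L2_translation_continuous_def by blast
  obtain Wg where Wg: "open Wg" "0 \<in> Wg" "\<forall>w\<in>Wg. l2_norm m (\<lambda>v. g (w + v) - g v) < e/2"
    using tg e2 unfolding L2_translation_continuous_def by blast
  have "l2_norm m (\<lambda>v. (f (w + v) + g (w + v)) - (f v + g v)) < e" if w: "w \<in> Wf \<inter> Wg" for w
  proof -
    have "l2_norm m (\<lambda>v. (f (w + v) + g (w + v)) - (f v + g v))
        = l2_norm m (\<lambda>v. (f (w + v) - f v) + (g (w + v) - g v))"
      by (simp add: algebra_simps)
    also have "\<dots> \<le> l2_norm m (\<lambda>v. f (w + v) - f v) + l2_norm m (\<lambda>v. g (w + v) - g v)"
      by (intro l2_norm_add_le L2_diff L2_translate f g)
    also have "\<dots> < e" using w Wf(3) Wg(3) by fastforce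
    finally show ?thesis .
  qed
  with Wf(1,2) Wg(1,2) show "\<exists>W. open W \<and> 0 \<in> W \<and>
      (\<forall>w\<in>W. l2_norm m (\<lambda>v. (f (w + v) + g (w + v)) - (f v + g v)) < e)"
    by (intro exI[of _ "Wf \<inter> Wg"]) auto
qed

lemma L2_translation_continuous_simple:
  assumes "simple_function m s"
  shows "L2_translation_continuous m s"
proof -
  have "emeasure m {x \<in> space m. s x \<noteq> 0} \<noteq> \<infinity>" by simp
  with assms show ?thesis
  proof (induction rule: integrable_simple_function_induct)
    case (cong f g)
    then have "f = g" by auto
    with cong show ?case by simp
  next
    case (indicator A y)
    then show ?case by (intro L2_translation_continuous_indicator) (simp add: sets_m)
  next
    case (add f g)
    then show ?case by (intro L2_translation_continuous_add simple_function_L2)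
  qed
qed

lemma L2_imp_translation_continuous:
  assumes f: "f \<in> L2 m"
  shows "L2_translation_continuous m f"
  unfolding L2_translation_continuous_def
proof (intro allI impI)
  fix e :: real assume "e > 0"
  then have e3: "e/3 > 0" by simp
  obtain s where s: "simple_function m s" "l2_norm m (\<lambda>x. s x - f x) < e/3"
    using L2_simple_approx[OF f e3] by blast
  have sL2: "s \<in> L2 m" using s(1) by (rule simple_function_L2)
  obtain W where W: "open W" "0 \<in> W" "\<forall>w\<in>W. l2_norm m (\<lambda>v. s (w + v) - s v) < e/3"
    using L2_translation_continuous_simple[OF s(1)] e3 unfolding L2_translation_continuous_def by blast
  have "l2_norm m (\<lambda>v. f (w + v) - f v) < e" if w: "w \<in> W" for w
  proof -
    have "l2_norm m (\<lambda>v. f (w + v) - f v)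
        \<le> l2_norm m (\<lambda>v. f (w + v) - s (w + v)) + l2_norm m (\<lambda>v. s (w + v) - f v)"
      by (intro l2_norm_diff_triangle L2_translate f sL2)
    also have "\<dots> \<le> l2_norm m (\<lambda>v. f (w + v) - s (w + v))
        + (l2_norm m (\<lambda>v. s (w + v) - s v) + l2_norm m (\<lambda>v. s v - f v))"
      by (intro add_left_mono l2_norm_diff_triangle L2_translate f sL2)
    also have "l2_norm m (\<lambda>v. f (w + v) - s (w + v)) = l2_norm m (\<lambda>v. s v - f v)"
      using l2_norm_translate[OF L2_measurable[OF L2_diff[OF f sL2]], of w]
      by (simp add: l2_norm_minus_commute[of m f s])
    also have "\<dots> + (l2_norm m (\<lambda>v. s (w + v) - s v) + l2_norm m (\<lambda>v. s v - f v)) < e"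
      using s(2) W(3) w by fastforce
    finally show ?thesis .
  qed
  with W(1,2) show "\<exists>W. open W \<and> 0 \<in> W \<and> (\<forall>w\<in>W. l2_norm m (\<lambda>v. f (w + v) - f v) < e)"
    by blast
qed

lemma translated_coefficient_diff_le:
  assumes f: "f \<in> L2 m" and g: "g \<in> L2 m"
    and \<Psi>: "\<Psi> \<in> borel_measurable m" "\<Psi>' \<in> borel_measurable m"
    and close: "\<And>u. cmod (\<Psi> u - \<Psi>' u) \<le> \<eta>" and bounded: "\<And>u. cmod (\<Psi>' u) \<le> 1"
  shows "cmod ((\<integral>u. \<Psi> u * f (a + u) * cnj (g u) \<partial>m) - (\<integral>u. \<Psi>' u * f (b + u) * cnj (g u) \<partial>m))
    \<le> \<eta> * l2_norm m f * l2_norm m g + l2_norm m (\<lambda>u. f (a + u) - f (b + u)) * l2_norm m g"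
proof -
  have \<Psi>_bound: "cmod (\<Psi> u) \<le> \<eta> + 1" for u
    using norm_triangle_ineq2[of "\<Psi> u" "\<Psi>' u"] close[of u] bounded[of u] by linarith
  have fab: "(\<lambda>u. f (a + u) - f (b + u)) \<in> L2 m"
    by (intro L2_diff L2_translate f)
  have "(\<integral>u. \<Psi> u * f (a + u) * cnj (g u) \<partial>m) - (\<integral>u. \<Psi>' u * f (b + u) * cnj (g u) \<partial>m)
      = (\<integral>u. \<Psi> u * f (a + u) * cnj (g u) - \<Psi>' u * f (b + u) * cnj (g u) \<partial>m)"
    using L2_bounded_product_translate(1)[OF f g \<Psi>(1) \<Psi>_bound, of a]
      L2_bounded_product_translate(1)[OF f g \<Psi>(2) bounded, of b]
    by simp
  also have "\<dots> = (\<integral>u. (\<Psi> u - \<Psi>' u) * f (a + u) * cnj (g u) + \<Psi>' u * (f (a + u) - f (b + u)) * cnj (g u) \<partial>m)"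
    by (intro Bochner_Integration.integral_cong) (simp_all add: algebra_simps)
  also have "\<dots> = (\<integral>u. (\<Psi> u - \<Psi>' u) * f (a + u) * cnj (g u) \<partial>m) + (\<integral>u. \<Psi>' u * (f (a + u) - f (b + u)) * cnj (g u) \<partial>m)"
    using L2_bounded_product_translate(1)[OF f g borel_measurable_diff[OF \<Psi>] close, of a]
      L2_bounded_product(1)[OF fab g \<Psi>(2) bounded]
    by (rule Bochner_Integration.integral_add)
  also have "cmod \<dots> \<le> \<eta> * l2_norm m f * l2_norm m g + 1 * l2_norm m (\<lambda>u. f (a + u) - f (b + u)) * l2_norm m g"
    using L2_bounded_product_translate(2)[OF f g borel_measurable_diff[OF \<Psi>] close, of a]
      L2_bounded_product(2)[OF fab g \<Psi>(2) bounded]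
    by (intro norm_triangle_le add_mono)
  finally show ?thesis by simp
qed

lemma continuous_on_translated_coefficient:
  fixes \<Phi> :: "'p::topological_space \<times> 'k \<Rightarrow> complex"
  assumes K: "compact (UNIV :: 'k set)"
    and \<Phi>: "continuous_on UNIV \<Phi>" "\<And>z. cmod (\<Phi> z) \<le> 1"
    and \<tau>: "continuous_on UNIV \<tau>" and f: "f \<in> L2 m" and g: "g \<in> L2 m"
  shows "continuous_on UNIV (\<lambda>p. \<integral>u. \<Phi> (p, u) * f (\<tau> p + u) * cnj (g u) \<partial>m)"
proof (rule continuous_on_UNIV_metricI)
  fix p0 :: 'p and e :: real
  assume e: "e > 0"
  let ?J = "\<lambda>p. \<integral>u. \<Phi> (p, u) * f (\<tau> p + u) * cnj (g u) \<partial>m"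
  let ?nf = "l2_norm m f" and ?ng = "l2_norm m g"
  have nf: "?nf \<ge> 0" and ng: "?ng \<ge> 0" by (simp_all add: l2_norm_nonneg)
  define \<eta> where "\<eta> = e / (2 * (?nf * ?ng + 1))"
  define \<eta>' where "\<eta>' = e / (2 * (?ng + 1))"
  have "\<eta> > 0" "\<eta>' > 0"
    unfolding \<eta>_def \<eta>'_def using e nf ng by (simp_all add: add_nonneg_pos)
  obtain N where N: "open N" "p0 \<in> N" "\<And>p u. p \<in> N \<Longrightarrow> dist (\<Phi> (p, u)) (\<Phi> (p0, u)) < \<eta>"
    using uniformly_close_on_compact_fibres[OF K \<Phi>(1) \<open>\<eta> > 0\<close>] by blast
  obtain W where W: "open W" "0 \<in> W" "\<forall>w\<in>W. l2_norm m (\<lambda>v. f (w + v) - f v) < \<eta>'"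
    using L2_imp_translation_continuous[OF f] \<open>\<eta>' > 0\<close> unfolding L2_translation_continuous_def by blast
  define N' where "N' = N \<inter> (\<lambda>p. \<tau> p - \<tau> p0) -` W"
  have "open N'" unfolding N'_def using N(1) W(1) \<tau> by (intro open_Int open_vimage continuous_intros)
  moreover have "p0 \<in> N'" unfolding N'_def using N(2) W(2) by simp
  moreover have "dist (?J p) (?J p0) < e" if p: "p \<in> N'" for p
  proof -
    have sections: "(\<lambda>u. \<Phi> (q, u)) \<in> borel_measurable m" for q
      by (intro borel_measurable_continuous_m continuous_on_compose2[OF \<Phi>(1)] continuous_intros) auto
    have close: "cmod (\<Phi> (p, u) - \<Phi> (p0, u)) \<le> \<eta>" for u
      using N(3)[of p u] p unfolding N'_def by (simp add: dist_norm)
    have shift: "l2_norm m (\<lambda>u. f (\<tau> p + u) - f (\<tau> p0 + u)) < \<eta>'"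
      using W(3) p unfolding N'_def l2_norm_translate_diff[OF f] by simp
    have "dist (?J p) (?J p0) \<le> \<eta> * ?nf * ?ng + l2_norm m (\<lambda>u. f (\<tau> p + u) - f (\<tau> p0 + u)) * ?ng"
      unfolding dist_norm by (rule translated_coefficient_diff_le[OF f g sections sections close \<Phi>(2)])
    also have "\<dots> \<le> \<eta> * (?nf * ?ng) + \<eta>' * ?ng"
      using shift ng by (simp add: mult.assoc mult_right_mono)
    also have "\<dots> < e / 2 + e / 2"
      unfolding \<eta>_def \<eta>'_def using e nf ng
      by (intro add_strict_mono divide_add_one_mult_less) simp_all
    finally show ?thesis by simp
  qed
  ultimately show "\<exists>N. open N \<and> p0 \<in> N \<and> (\<forall>p\<in>N. dist (?J p) (?J p0) < e)"
    by blast
qed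

end

section \<open>Coefficients of the representations \<open>\<Lambda>\<^sub>\<alpha>\<close>\<close>

lemma dual_group_continuous: "\<gamma> \<in> dual_group \<Longrightarrow> continuous_on UNIV \<gamma>"
  and dual_group_norm: "\<gamma> \<in> dual_group \<Longrightarrow> cmod (\<gamma> a) = 1"
  unfolding dual_group_def by auto

lemma one_in_dual_group: "(\<lambda>a. 1) \<in> dual_group"
  unfolding dual_group_def by simp

lemma norm_diff_dual_group:
  assumes "\<beta> \<in> dual_group"
  shows "cmod (\<alpha> a - \<beta> a) = cmod (\<alpha> a * cnj (\<beta> a) - 1)"
proof -
  have "\<beta> a * cnj (\<beta> a) = 1"
    using dual_group_norm[OF assms, of a] complex_norm_square[of "\<beta> a"] by simp
  then have "\<alpha> a - \<beta> a = (\<alpha> a * cnj (\<beta> a) - 1) * \<beta> a"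
    by (simp add: algebra_simps)
  then show ?thesis using dual_group_norm[OF assms, of a] by (simp add: norm_mult)
qed

lemma dual_open_compact_nbhd:
  fixes C :: "'a::topological_ab_group_add set"
  assumes C: "compact C" and \<delta>: "\<delta> > 0"
  shows "dual_open {\<gamma>\<in>dual_group. \<forall>c\<in>C. cmod (\<gamma> c - 1) < \<delta>}"
  unfolding dual_open_def
proof (intro conjI ballI)
  fix \<alpha> assume \<alpha>: "\<alpha> \<in> {\<gamma>\<in>dual_group. \<forall>c\<in>C. cmod (\<gamma> c - 1) < \<delta>}"
  show "\<exists>C' \<delta>'. compact C' \<and> \<delta>' > 0 \<and>
      {\<gamma>\<in>dual_group. \<forall>a\<in>C'. cmod (\<gamma> a - \<alpha> a) < \<delta>'} \<subseteq> {\<gamma>\<in>dual_group. \<forall>c\<in>C. cmod (\<gamma> c - 1) < \<delta>}"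
  proof (cases "C = {}")
    case True
    then show ?thesis using \<delta> by blast
  next
    case False
    have "continuous_on C (\<lambda>c. cmod (\<alpha> c - 1))"
      using \<alpha> by (auto intro!: continuous_intros intro: continuous_on_subset dual_group_continuous)
    then obtain c0 where c0: "c0 \<in> C" "\<And>c. c \<in> C \<Longrightarrow> cmod (\<alpha> c - 1) \<le> cmod (\<alpha> c0 - 1)"
      using continuous_attains_sup[OF C False] by blast
    have "{\<gamma>\<in>dual_group. \<forall>a\<in>C. cmod (\<gamma> a - \<alpha> a) < \<delta> - cmod (\<alpha> c0 - 1)}
        \<subseteq> {\<gamma>\<in>dual_group. \<forall>c\<in>C. cmod (\<gamma> c - 1) < \<delta>}"
    proof safe
      fix \<gamma> c assume "\<forall>a\<in>C. cmod (\<gamma> a - \<alpha> a) < \<delta> - cmod (\<alpha> c0 - 1)" "c \<in> C"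
      moreover have "cmod (\<gamma> c - 1) \<le> cmod (\<gamma> c - \<alpha> c) + cmod (\<alpha> c - 1)"
        using norm_triangle_ineq[of "\<gamma> c - \<alpha> c" "\<alpha> c - 1"] by simp
      ultimately show "cmod (\<gamma> c - 1) < \<delta>" using c0(2) by fastforce
    qed
    moreover have "\<delta> - cmod (\<alpha> c0 - 1) > 0" using \<alpha> c0(1) by simp
    ultimately show ?thesis using C by blast
  qed
qed auto

lemma l2_inner_Lambda_sd_inv:
  "l2_inner m (Lambda \<phi> \<gamma> (sd_inv \<phi> x) f) g
    = (\<integral>u. \<gamma> (\<phi> (- u) (fst (sd_inv \<phi> x))) * f (snd x + u) * cnj (g u) \<partial>m)"
  by (simp add: l2_inner_def Lambda_def dual_act_def sd_inv_def)

lemma form_norm_le: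
  assumes "\<And>f g. f \<in> L2 m \<Longrightarrow> g \<in> L2 m \<Longrightarrow> l2_norm m f \<le> 1 \<Longrightarrow> l2_norm m g \<le> 1 \<Longrightarrow> cmod (B f g) \<le> c"
  shows "form_norm m B \<le> c"
  unfolding form_norm_def
proof (rule cSUP_least)
  have "(\<lambda>x. 0) \<in> L2 m" "l2_norm m (\<lambda>x. 0) \<le> 1"
    unfolding L2_def l2_norm_def by simp_all
  then show "{(f, g). f \<in> L2 m \<and> g \<in> L2 m \<and> l2_norm m f \<le> 1 \<and> l2_norm m g \<le> 1} \<noteq> {}"
    by blast
qed (use assms in auto)

locale motion_group = haar_group m
  for m :: "'k::{topological_group_add, t2_space} measure" +
  fixes \<phi> :: "'k \<Rightarrow> 'a::{topological_ab_group_add, t2_space} \<Rightarrow> 'a"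
  assumes compact_K: "compact (UNIV :: 'k set)"
    and motion_action: "motion_action \<phi>"
begin

lemma continuous_on_action: "continuous_on UNIV (\<lambda>p::'a \<times> 'k. \<phi> (snd p) (fst p))"
  using motion_action unfolding motion_action_def by blast

lemma continuous_on_inverse_orbit:
  "continuous_on UNIV (\<lambda>z::('a \<times> 'k) \<times> 'k. \<phi> (- snd z) (fst (sd_inv \<phi> (fst z))))"
proof -
  have "continuous_on UNIV (\<lambda>z::('a \<times> 'k) \<times> 'k. \<phi> (- snd (fst z)) (fst (fst z)))"
    using continuous_on_compose2[OF continuous_on_action, of UNIV "\<lambda>z. (fst (fst z), - snd (fst z))"]
    by (simp add: continuous_intros)
  then have "continuous_on UNIV (\<lambda>z::('a \<times> 'k) \<times> 'k. (fst (sd_inv \<phi> (fst z)), - snd z))"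
    unfolding sd_inv_def by (intro continuous_intros) simp_all
  from continuous_on_compose2[OF continuous_on_action this] show ?thesis by simp
qed

lemma coefficient_continuous:
  assumes "\<gamma> \<in> dual_group" "f \<in> L2 m" "g \<in> L2 m"
  shows "continuous_on UNIV (\<lambda>x. l2_inner m (Lambda \<phi> \<gamma> (sd_inv \<phi> x) f) g)"
proof -
  let ?\<Phi> = "\<lambda>z. \<gamma> (\<phi> (- snd z) (fst (sd_inv \<phi> (fst z))))"
  have "continuous_on UNIV ?\<Phi>"
    using continuous_on_compose2[OF dual_group_continuous[OF assms(1)] continuous_on_inverse_orbit] by simp
  moreover have "cmod (?\<Phi> z) \<le> 1" for z
    using dual_group_norm[OF assms(1)] by simp
  ultimately show ?thesis
    using continuous_on_translated_coefficient[OF compact_K _ _ continuous_on_snd[OF continuous_on_id] assms(2,3), of ?\<Phi>]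
    by (simp add: l2_inner_Lambda_sd_inv)
qed

lemma measurable_orbit_character:
  assumes "\<gamma> \<in> dual_group"
  shows "(\<lambda>u. \<gamma> (\<phi> (- u) b)) \<in> borel_measurable m"
proof -
  have "continuous_on UNIV (\<lambda>u. \<phi> (- u) b)"
    using continuous_on_compose2[OF continuous_on_action, of UNIV "\<lambda>u. (b, - u)"]
    by (simp add: continuous_intros)
  from continuous_on_compose2[OF dual_group_continuous[OF assms] this]
  show ?thesis by (simp add: borel_measurable_continuous_m)
qed

lemma coefficient_bound:
  assumes "\<gamma> \<in> dual_group" "f \<in> L2 m" "g \<in> L2 m"
  shows "cmod (l2_inner m (Lambda \<phi> \<gamma> (sd_inv \<phi> x) f) g) \<le> l2_norm m f * l2_norm m g"
  unfolding l2_inner_Lambda_sd_inv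
  using L2_bounded_product_translate(2)[OF assms(2,3) measurable_orbit_character[OF assms(1)], where B = 1]
    dual_group_norm[OF assms(1)] by simp

lemma coefficient_diff_le:
  assumes "\<alpha> \<in> dual_group" "\<beta> \<in> dual_group" "f \<in> L2 m" "g \<in> L2 m"
    and "\<And>u. cmod (\<alpha> (\<phi> (- u) (fst (sd_inv \<phi> x))) - \<beta> (\<phi> (- u) (fst (sd_inv \<phi> x)))) \<le> \<delta>"
  shows "cmod (l2_inner m (Lambda \<phi> \<alpha> (sd_inv \<phi> x) f) g - l2_inner m (Lambda \<phi> \<beta> (sd_inv \<phi> x) f) g)
    \<le> \<delta> * l2_norm m f * l2_norm m g"
  unfolding l2_inner_Lambda_sd_inv
  using translated_coefficient_diff_le[OF assms(3,4) measurable_orbit_character[OF assms(1)]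
      measurable_orbit_character[OF assms(2)] assms(5), of "snd x" "snd x"]
    dual_group_norm[OF assms(2)] by (simp add: l2_norm_def)

lemma integrable_ft_form_integrand:
  fixes \<nu> :: "('a \<times> 'k) measure"
  assumes \<nu>: "radon_fin \<nu>" and h: "h \<in> borel_measurable borel" "\<And>x. cmod (h x) \<le> 1"
    and \<gamma>: "\<gamma> \<in> dual_group" and f: "f \<in> L2 m" and g: "g \<in> L2 m"
  shows "integrable \<nu> (\<lambda>x. h x * l2_inner m (Lambda \<phi> \<gamma> (sd_inv \<phi> x) f) g)"
proof (rule finite_measure.integrable_const_bound[where B = "l2_norm m f * l2_norm m g"])
  let ?J = "\<lambda>x. l2_inner m (Lambda \<phi> \<gamma> (sd_inv \<phi> x) f) g"
  show "finite_measure \<nu>" using \<nu> by (rule radon_fin_finite_measure)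
  have "cmod (h x) * cmod (?J x) \<le> l2_norm m f * l2_norm m g" for x
    using mult_left_le_one_le[OF norm_ge_zero norm_ge_zero h(2)] coefficient_bound[OF \<gamma> f g, of x]
    by (rule order_trans)
  then show "AE x in \<nu>. cmod (h x * ?J x) \<le> l2_norm m f * l2_norm m g"
    by (simp add: norm_mult)
  \<comment> \<open>the Borel sets of \<open>A \<times> K\<close> need not be generated by rectangles, so measurability
    of the coefficient comes from its continuity, not from Fubini\<close>
  have "?J \<in> borel_measurable borel"
    using coefficient_continuous[OF \<gamma> f g] by (rule borel_measurable_continuous_onI)
  with h(1) show "(\<lambda>x. h x * ?J x) \<in> borel_measurable \<nu>"
    by (simp add: measurable_cong_sets[OF radon_fin_sets[OF \<nu>] refl])
qed

lemma ft_form_diff_le: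
  fixes \<nu> :: "('a \<times> 'k) measure"
  assumes \<nu>: "radon_fin \<nu>" and h: "h \<in> borel_measurable borel" "\<And>x. cmod (h x) \<le> 1"
    and \<alpha>: "\<alpha> \<in> dual_group" and \<beta>: "\<beta> \<in> dual_group"
    and f: "f \<in> L2 m" "l2_norm m f \<le> 1" and g: "g \<in> L2 m" "l2_norm m g \<le> 1"
    and C0: "C0 \<in> sets borel" and \<delta>: "0 \<le> \<delta>"
    and close: "\<And>x u. x \<in> C0 \<Longrightarrow>
      cmod (\<alpha> (\<phi> (- u) (fst (sd_inv \<phi> x))) - \<beta> (\<phi> (- u) (fst (sd_inv \<phi> x)))) \<le> \<delta>"
  shows "cmod (ft_form \<phi> m \<nu> h \<alpha> f g - ft_form \<phi> m \<nu> h \<beta> f g)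
    \<le> \<delta> * measure \<nu> UNIV + 2 * measure \<nu> (UNIV - C0)"
proof -
  interpret \<nu>: finite_measure \<nu> using \<nu> by (rule radon_fin_finite_measure)
  let ?J = "\<lambda>\<gamma> x. l2_inner m (Lambda \<phi> \<gamma> (sd_inv \<phi> x) f) g"
  have fg: "l2_norm m f * l2_norm m g \<le> 1"
    using f g by (simp add: mult_le_one l2_norm_nonneg)
  have pointwise: "cmod (h x * ?J \<alpha> x - h x * ?J \<beta> x) \<le> \<delta> + 2 * indicator (UNIV - C0) x" for x
  proof -
    have "cmod (h x * ?J \<alpha> x - h x * ?J \<beta> x) \<le> cmod (?J \<alpha> x - ?J \<beta> x)"
      using h(2)[of x] by (simp add: norm_mult mult_left_le_one_le flip: right_diff_distrib)
    also have "\<dots> \<le> \<delta> + 2 * indicator (UNIV - C0) x"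
    proof (cases "x \<in> C0")
      case True
      then have "cmod (?J \<alpha> x - ?J \<beta> x) \<le> \<delta> * l2_norm m f * l2_norm m g"
        using close by (intro coefficient_diff_le[OF \<alpha> \<beta> f(1) g(1)])
      also have "\<dots> \<le> \<delta>"
        using mult_left_mono[OF fg \<delta>] by (simp add: mult.assoc)
      finally show ?thesis using True by simp
    next
      case False
      have "cmod (?J \<alpha> x - ?J \<beta> x) \<le> cmod (?J \<alpha> x) + cmod (?J \<beta> x)"
        by (rule norm_triangle_ineq4)
      also have "\<dots> \<le> 2"
        using coefficient_bound[OF \<alpha> f(1) g(1), of x] coefficient_bound[OF \<beta> f(1) g(1), of x] fg
        by linarith
      finally show ?thesis using False \<delta> by simp
    qed
    finally show ?thesis .
  qed
  have "UNIV - C0 \<in> sets \<nu>" using C0 radon_fin_sets[OF \<nu>] by auto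
  then have indicator_integrable: "integrable \<nu> (indicator (UNIV - C0) :: _ \<Rightarrow> real)"
    by (simp add: less_top[symmetric])
  note integrable = integrable_ft_form_integrand[OF \<nu> h _ f(1) g(1)]
  have "cmod (ft_form \<phi> m \<nu> h \<alpha> f g - ft_form \<phi> m \<nu> h \<beta> f g)
      = cmod (\<integral>x. h x * ?J \<alpha> x - h x * ?J \<beta> x \<partial>\<nu>)"
    unfolding ft_form_def using integrable[OF \<alpha>] integrable[OF \<beta>] by simp
  also have "\<dots> \<le> (\<integral>x. cmod (h x * ?J \<alpha> x - h x * ?J \<beta> x) \<partial>\<nu>)"
    by (rule integral_norm_bound)
  also have "\<dots> \<le> (\<integral>x. \<delta> + 2 * indicator (UNIV - C0) x \<partial>\<nu>)"
    using integrable[OF \<alpha>] integrable[OF \<beta>] pointwise indicator_integrable by (intro integral_mono) auto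
  also have "\<dots> = \<delta> * measure \<nu> UNIV + 2 * measure \<nu> (UNIV - C0)"
    using indicator_integrable radon_fin_space[OF \<nu>] by simp
  finally show ?thesis .
qed

lemma dual_nbhd_bounds_ft_form_diff:
  fixes \<nu> :: "('a \<times> 'k) measure"
  assumes \<nu>: "radon_fin \<nu>" and h: "h \<in> borel_measurable borel" "\<And>x. cmod (h x) \<le> 1"
    and C0: "compact C0" and \<delta>: "0 < \<delta>"
  obtains V where "dual_open V" "(\<lambda>a. 1) \<in> V"
    "\<And>\<alpha> \<beta>. \<alpha> \<in> dual_group \<Longrightarrow> \<beta> \<in> dual_group \<Longrightarrow> (\<lambda>a. \<alpha> a * cnj (\<beta> a)) \<in> V \<Longrightarrow>
      form_norm m (\<lambda>f g. ft_form \<phi> m \<nu> h \<alpha> f g - ft_form \<phi> m \<nu> h \<beta> f g)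
        \<le> \<delta> * measure \<nu> UNIV + 2 * measure \<nu> (UNIV - C0)"
proof
  let ?\<iota> = "\<lambda>z::('a \<times> 'k) \<times> 'k. \<phi> (- snd z) (fst (sd_inv \<phi> (fst z)))"
  let ?V = "{\<gamma>\<in>dual_group. \<forall>c\<in>?\<iota> ` (C0 \<times> UNIV). cmod (\<gamma> c - 1) < \<delta>}"
  have "compact (?\<iota> ` (C0 \<times> UNIV))"
    using C0 compact_K continuous_on_subset[OF continuous_on_inverse_orbit]
    by (intro compact_continuous_image compact_Times) auto
  then show "dual_open ?V" using \<delta> by (rule dual_open_compact_nbhd)
  show "(\<lambda>a. 1) \<in> ?V" using one_in_dual_group \<delta> by simp
  fix \<alpha> \<beta> assume \<alpha>: "\<alpha> \<in> dual_group" and \<beta>: "\<beta> \<in> dual_group"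
    and V: "(\<lambda>a. \<alpha> a * cnj (\<beta> a)) \<in> ?V"
  have "cmod (\<alpha> (?\<iota> (x, u)) - \<beta> (?\<iota> (x, u))) \<le> \<delta>" if "x \<in> C0" for x u
    using V that norm_diff_dual_group[OF \<beta>] by (auto intro: less_imp_le)
  with \<nu> h \<alpha> \<beta> C0 \<delta> show "form_norm m (\<lambda>f g. ft_form \<phi> m \<nu> h \<alpha> f g - ft_form \<phi> m \<nu> h \<beta> f g)
      \<le> \<delta> * measure \<nu> UNIV + 2 * measure \<nu> (UNIV - C0)"
    by (intro form_norm_le ft_form_diff_le) (auto simp: compact_imp_closed)
qed

end

theorem theorem3p3:
  fixes \<phi> :: "'k::{topological_group_add, t2_space} \<Rightarrow> 'a::{topological_ab_group_add, t2_space} \<Rightarrow> 'a"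
    and m :: "'k measure"
    and \<nu> :: "('a \<times> 'k) measure"
    and h :: "'a \<times> 'k \<Rightarrow> complex"
  assumes "locally_compact_space (euclidean :: 'a topology)"
    and "compact (UNIV :: 'k set)"
    and "motion_action \<phi>"
    and "haar_prob m"
    and "regular_action \<phi>"
    and "radon_fin \<nu>"
    and "h \<in> borel_measurable borel"
    and "\<forall>x. cmod (h x) \<le> 1"
  shows "\<forall>\<epsilon>>0. \<exists>V. dual_open V \<and> (\<lambda>a. 1) \<in> V \<and>
           (\<forall>\<alpha>\<in>dual_group. \<forall>\<beta>\<in>dual_group. (\<lambda>a. \<alpha> a * cnj (\<beta> a)) \<in> V \<longrightarrow>
              form_norm m (\<lambda>f g. ft_form \<phi> m \<nu> h \<alpha> f g - ft_form \<phi> m \<nu> h \<beta> f g) < \<epsilon>)"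
proof (intro allI impI)
  fix \<epsilon> :: real assume \<epsilon>: "\<epsilon> > 0"
  interpret motion_group m \<phi> using assms(2-4) by unfold_locales
  obtain C0 where C0: "compact C0" "measure \<nu> (UNIV - C0) < \<epsilon> / 4"
    using radon_fin_inner_compact[OF assms(6), of UNIV "\<epsilon> / 4"] \<epsilon> by auto
  define M where "M = measure \<nu> UNIV"
  have M: "0 \<le> M" unfolding M_def by simp
  define \<delta> where "\<delta> = \<epsilon> / (4 * (M + 1))"
  have \<delta>: "0 < \<delta>" "\<delta> * M \<le> \<epsilon> / 4"
    unfolding \<delta>_def using \<epsilon> M by (simp_all add: field_simps)
  obtain V where "dual_open V" "(\<lambda>a. 1) \<in> V"
    and V: "\<And>\<alpha> \<beta>. \<alpha> \<in> dual_group \<Longrightarrow> \<beta> \<in> dual_group \<Longrightarrow> (\<lambda>a. \<alpha> a * cnj (\<beta> a)) \<in> V \<Longrightarrow>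
      form_norm m (\<lambda>f g. ft_form \<phi> m \<nu> h \<alpha> f g - ft_form \<phi> m \<nu> h \<beta> f g)
        \<le> \<delta> * M + 2 * measure \<nu> (UNIV - C0)"
    using dual_nbhd_bounds_ft_form_diff[OF assms(6,7) _ C0(1) \<delta>(1)] assms(8) unfolding M_def by blast
  moreover have "\<delta> * M + 2 * measure \<nu> (UNIV - C0) < \<epsilon>"
    using \<epsilon> \<delta>(2) C0(2) by linarith
  ultimately show "\<exists>V. dual_open V \<and> (\<lambda>a. 1) \<in> V \<and>
           (\<forall>\<alpha>\<in>dual_group. \<forall>\<beta>\<in>dual_group. (\<lambda>a. \<alpha> a * cnj (\<beta> a)) \<in> V \<longrightarrow>
              form_norm m (\<lambda>f g. ft_form \<phi> m \<nu> h \<alpha> f g - ft_form \<phi> m \<nu> h \<beta> f g) < \<epsilon>)"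
    using V by (meson le_less_trans)
qed

end
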